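(* Let $(U,\Phi)$ be a two-phase quantum walk with one defect with an initial state $\Phi\in\mathcal H_0$. Then $(U,\Phi)$ is unitary equivalent to $(U_{r,\mu},\Phi_{\alpha,\theta})$ for some $0\le r_\varepsilon,\alpha\le1$ ($\varepsilon=+,-,0$) and $\mu_i,\theta\in\mathbb R$ ($i=1,2,3$), where $\Phi_{\alpha,\theta}=\alpha e_1^0+e^{i\theta}\sqrt{1-\alpha^2}\,e_2^0$ and \begin{align*} U_{r,\mu}={}&|e_1^{-1}\rangle\langle r_0e_1^0+e^{i\mu_1}s_0e_2^0|+|e_2^{1}\rangle\langle -e^{i\mu_2}s_0e_1^0+e^{i(\mu_1+\mu_2)}r_0e_2^0|\\ &+\sum_{n\ge1}|e_1^{n-1}\rangle\langle r_+e_1^n+s_+e_2^n|+|e_2^{n+1}\rangle\langle -e^{i\mu_3}s_+e_1^n+e^{i\mu_3}r_+e_2^n|\\ &+\sum_{n\le-1}|e_1^{n-1}\rangle\langle r_-e_1^n+s_-e_2^n|+|e_2^{n+1}\rangle\langle -s_-e_1^n+r_-e_2^n|, \end{align*} with $s_\varepsilon=\sqrt{1-r_\varepsilon^2}$, $r=(r_+,r_-,r_0)$, $\mu=(\mu_1,\mu_2,\mu_3)$. Moreover, for $0<r_\varepsilon,r'_\varepsilon,\alpha,\alpha'<1$ and $\mu_i,\mu'_i,\theta,\theta'\in[0,2\pi)$, the pairs $(U_{r,\mu},\Phi_{\alpha,\theta})$ and $(U_{r',\mu'},\Phi_{\alpha',\theta'})$ are unitary equivalent if and only if $r=r'$, $\mu=\mu'$,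 $\alpha=\alpha'$ and $\theta=\theta'$.
   Context: Let $\mathcal H_n=\mathbb C^2$ for $n\in\mathbb Z$, $\mathcal H=\bigoplus_{n\in\mathbb Z}\mathcal H_n$, $P_n$ the orthogonal projection onto $\mathcal H_n$, and $\{e_1^n,e_2^n\}$ the standard basis of $\mathcal H_n$; each $\mathcal H_n$ is identified with $\mathbb C^2$. Dirac notation: $|x\rangle\langle y|$ is the operator $z\mapsto\langle y,z\rangle x$ (inner product conjugate-linear in the first argument). A one-dimensional quantum walk is a unitary $U$ on $\mathcal H$ with $\operatorname{rank}(P_nUP_m)=1$ if $m=n\pm1$ and $0$ otherwise. Every such $U$ can be written as $U=\sum_{n\in\mathbb Z}|\xi_{n-1,n}\rangle\langle\zeta_{n-1,n}|+|\xi_{n+1,n}\rangle\langle\zeta_{n+1,n}|$, where $\{\xi_{n,n+1},\xi_{n+1,n}\}_{n}$ and $\{\zeta_{n,n+1},\zeta_{n+1,n}\}_{n}$ are orthonormal bases of $\mathcal H$ with $\xi_{n,n+1},\zeta_{n+1,n}\in\mathcal H_n$ and $\xi_{n+1,n},\zeta_{n,n+1}\in\mathcal H_{n+1}$. $U$ is a two-phase quantum walk with one defect if it has such a representation for which there exist $\xi_1^\pm,\xi_2^\pm,\zeta_1^\pm,\zeta_2^\pm\in\mathbb C^2$ with $\xi_{n,n+1}=\xi_1^+$, $\xi_{n,n-1}=\xi_2^+$, $\zeta_{n-1,n}=\zeta_1^+$, $\zeta_{n+1,n}=\zeta_2^+$ for all $n\ge1$, and the same with superscript $-$ for all $n\le-1$.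 An initial state is a unit vector $\Phi\in\mathcal H_0$. Since a walk $U$ is identified with $e^{i\lambda}U$ and a state $\Phi$ with $e^{i\lambda}\Phi$ ($\lambda\in\mathbb R$), pairs $(U,\Phi)$ and $(U',\Phi')$ are called unitary equivalent if there exist $\lambda,\lambda'\in\mathbb R$ and a unitary $W=\bigoplus_nW_n$ ($W_n$ unitary on $\mathcal H_n$) with $e^{i\lambda}WUW^*=U'$ and $e^{i\lambda'}W\Phi=\Phi'$. *)

theory Defs
  imports "HOL-Analysis.Analysis"
begin

text \<open>H = (+)_{n in Z} C^2. A (bounded) operator U on H whose blocks
  P_n U P_m vanish unless |n - m| = 1 is determined by its 2x2 blocks.
  We represent such an operator by the block function B with B n m = P_n U P_m
  (as a 2x2 complex matrix). Vectors of H_n are elements of complex^2.\<close>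

type_synonym cvec = "complex^2"
type_synonym cmat = "complex^2^2"
type_synonym blockop = "int \<Rightarrow> int \<Rightarrow> cmat"

definition e1 :: cvec where "e1 = vector [1, 0]"
definition e2 :: cvec where "e2 = vector [0, 1]"

definition cinner :: "cvec \<Rightarrow> cvec \<Rightarrow> complex" where
  "cinner x y = (\<Sum>i\<in>UNIV. cnj (x $ i) * y $ i)"

definition ket_bra :: "cvec \<Rightarrow> cvec \<Rightarrow> cmat" where
  "ket_bra x y = (\<chi> i j. x $ i * cnj (y $ j))"

definition adj :: "cmat \<Rightarrow> cmat" where
  "adj A = (\<chi> i j. cnj (A $ j $ i))"

definition unitary2 :: "cmat \<Rightarrow> bool" where
  "unitary2 W \<longleftrightarrow> W ** adj W = mat 1 \<and> adj W ** W = mat 1"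

definition onb2 :: "cvec \<Rightarrow> cvec \<Rightarrow> bool" where
  "onb2 a b \<longleftrightarrow> cinner a a = 1 \<and> cinner b b = 1 \<and> cinner a b = 0"

text \<open>One-dimensional quantum walk: the operator with blocks B is unitary on H and
  rank (P_n U P_m) = 1 if m = n +- 1 and 0 otherwise. Because of the band structure,
  the entries of U^* U and U U^* are finite sums (only k = n-1, n+1 contribute),
  and the matrix identities U^*U = UU^* = I (with columns of norm one) make the
  banded block matrix a bounded operator, which is then unitary.\<close>
definition quantum_walk :: "blockop \<Rightarrow> bool" where
  "quantum_walk B \<longleftrightarrow>
     (\<forall>n m. rank (B n m) = (if m = n + 1 \<or> m = n - 1 then 1 else 0)) \<and>
     (\<forall>n m. (\<Sum>k\<in>{n - 1, n + 1}. adj (B k n) ** B k m) = (if n = m then mat 1 else 0)) \<and>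
     (\<forall>n m. (\<Sum>k\<in>{n - 1, n + 1}. B n k ** adj (B m k)) = (if n = m then mat 1 else 0))"

text \<open>Representation U = sum_n |xi_{n-1,n}><zeta_{n-1,n}| + |xi_{n+1,n}><zeta_{n+1,n}|.
  Vectors living in H_n:  xr n = xi_{n,n+1},  xl n = xi_{n,n-1},
  zl n = zeta_{n-1,n},  zr n = zeta_{n+1,n}.  So P_{n-1} U P_n = |xr (n-1)><zl n| and
  P_{n+1} U P_n = |xl (n+1)><zr n|.\<close>
definition walk_repr :: "blockop \<Rightarrow> (int \<Rightarrow> cvec) \<Rightarrow> (int \<Rightarrow> cvec) \<Rightarrow> (int \<Rightarrow> cvec) \<Rightarrow> (int \<Rightarrow> cvec) \<Rightarrow> bool" where
  "walk_repr B xr xl zl zr \<longleftrightarrow>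
     (\<forall>n. onb2 (xr n) (xl n) \<and> onb2 (zl n) (zr n)) \<and>
     (\<forall>n m. B n m = (if n = m - 1 then ket_bra (xr n) (zl m)
                      else if n = m + 1 then ket_bra (xl n) (zr m) else 0))"

definition two_phase_one_defect :: "blockop \<Rightarrow> bool" where
  "two_phase_one_defect B \<longleftrightarrow> quantum_walk B \<and>
     (\<exists>xr xl zl zr x1p x2p z1p z2p x1m x2m z1m z2m.
        walk_repr B xr xl zl zr \<and>
        (\<forall>n\<ge>1. xr n = x1p \<and> xl n = x2p \<and> zl n = z1p \<and> zr n = z2p) \<and>
        (\<forall>n\<le>-1. xr n = x1m \<and> xl n = x2m \<and> zl n = z1m \<and> zr n = z2m))"

text \<open>Unitary equivalence of pairs (U, Phi), with W = (+)_n W_n: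
  e^{i l} W U W^* = U'  (blockwise: e^{i l} W_n (P_n U P_m) W_m^* = P_n U' P_m)
  and e^{i l'} W Phi = Phi' (Phi in H_0, so only W_0 acts).\<close>
definition unit_equiv :: "blockop \<Rightarrow> cvec \<Rightarrow> blockop \<Rightarrow> cvec \<Rightarrow> bool" where
  "unit_equiv B \<Phi> B' \<Phi>' \<longleftrightarrow>
     (\<exists>(l::real) (l'::real) (W::int \<Rightarrow> cmat).
        (\<forall>n. unitary2 (W n)) \<and>
        (\<forall>n m. (\<chi> i j. exp (\<i> * of_real l) * (W n ** B n m ** adj (W m)) $ i $ j) = B' n m) \<and>
        (\<chi> i. exp (\<i> * of_real l') * (W 0 *v \<Phi>) $ i) = \<Phi>')"

text \<open>The normal form U_{r,mu}, r = (rp, rm, r0), mu = (m1, m2, m3), s = sqrt(1 - r^2).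
  The term |e_1^{n-1}><v_n| gives block (n-1, n), the term |e_2^{n+1}><w_n| gives block (n+1, n).\<close>
definition Uq_v :: "real \<Rightarrow> real \<Rightarrow> real \<Rightarrow> real \<Rightarrow> int \<Rightarrow> cvec" where
  "Uq_v rp rm r0 m1 n =
     (if n = 0 then vector [complex_of_real r0, exp (\<i> * of_real m1) * of_real (sqrt (1 - r0\<^sup>2))]
      else if n \<ge> 1 then vector [complex_of_real rp, complex_of_real (sqrt (1 - rp\<^sup>2))]
      else vector [complex_of_real rm, complex_of_real (sqrt (1 - rm\<^sup>2))])"

definition Uq_w :: "real \<Rightarrow> real \<Rightarrow> real \<Rightarrow> real \<Rightarrow> real \<Rightarrow> real \<Rightarrow> int \<Rightarrow> cvec" where
  "Uq_w rp rm r0 m1 m2 m3 n =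
     (if n = 0 then vector [- exp (\<i> * of_real m2) * of_real (sqrt (1 - r0\<^sup>2)),
                            exp (\<i> * of_real (m1 + m2)) * of_real r0]
      else if n \<ge> 1 then vector [- exp (\<i> * of_real m3) * of_real (sqrt (1 - rp\<^sup>2)),
                                 exp (\<i> * of_real m3) * of_real rp]
      else vector [- complex_of_real (sqrt (1 - rm\<^sup>2)), complex_of_real rm])"

definition Uq :: "real \<Rightarrow> real \<Rightarrow> real \<Rightarrow> real \<Rightarrow> real \<Rightarrow> real \<Rightarrow> blockop" where
  "Uq rp rm r0 m1 m2 m3 n m =
     (if n = m - 1 then ket_bra e1 (Uq_v rp rm r0 m1 m)
      else if n = m + 1 then ket_bra e2 (Uq_w rp rm r0 m1 m2 m3 m) else 0)"

definition Phiq :: "real \<Rightarrow> real \<Rightarrow> cvec" where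
  "Phiq \<alpha> \<theta> = vector [complex_of_real \<alpha>, exp (\<i> * of_real \<theta>) * of_real (sqrt (1 - \<alpha>\<^sup>2))]"

end

theory Submission
  imports Defs
begin

text \<open>Conjugating by the block-diagonal unitary whose block at site n sends the orthonormal basis
  \<open>\<xi>(n,n+1), \<xi>(n,n-1)\<close> of the n-th site to \<open>p(n) e\<^sub>1, q(n) e\<^sub>2\<close>, with unimodular p and q,
  turns the walk into one that hops to the left by \<open>|e\<^sub>1\<rangle>\<langle>v(n)|\<close> and to the right by
  \<open>|e\<^sub>2\<rangle>\<langle>w(n)|\<close>, where \<open>v(n), w(n)\<close> are the coordinates of \<open>\<zeta>(n-1,n), \<zeta>(n+1,n)\<close> in that
  basis, twisted by p, q and a global phase E. The coin \<open>v(n), w(n)\<close> is an orthonormal basis of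
  \<open>\<complex>\<^sup>2\<close>, given by a modulus and three angles which the twist merely translates, so choosing p, q
  and E means solving a first order difference equation on \<open>\<int>\<close>. As the coins take only three
  values, all entries can be made real except for the three angles \<open>\<mu>\<^sub>1, \<mu>\<^sub>2, \<mu>\<^sub>3\<close> at the defect
  and the relative phase \<open>\<theta>\<close> of the initial state.

  Conversely, an equivalence between two walks in normal form with non-vanishing hops is diagonal.
  Comparing the positive entries of the hopping vectors at the sites -2 and -1 forces
  \<open>E\<^sup>2 = 1\<close>, after which every gauge phase met at the defect is 1, so all parameters agree.\<close>

lemma cnj_mult_self_eq_1_iff: "cnj z * z = 1 \<longleftrightarrow> cmod z = 1"
proof -
  have "cnj z * z = of_real ((cmod z)\<^sup>2)"
    using complex_norm_square[of z] by (simp add: mult.commute)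
  also have "\<dots> = 1 \<longleftrightarrow> (cmod z)\<^sup>2 = 1"
    by (rule of_real_eq_1_iff)
  also have "\<dots> \<longleftrightarrow> cmod z = 1"
    by (simp add: abs_square_eq_1)
  finally show ?thesis .
qed

lemma cis_Arg_mult_cmod: "cis (Arg z) * of_real (cmod z) = z"
  using rcis_cmod_Arg[of z] by (simp add: rcis_def mult.commute)

lemma cis_minus_Arg_mult: "cis (- Arg z) * z = cmod z"
proof -
  have "cis (- Arg z) * z = cis (- Arg z) * cis (Arg z) * cmod z"
    by (simp add: cis_Arg_mult_cmod mult.assoc)
  also have "\<dots> = cmod z"
    by (simp add: cis_mult)
  finally show ?thesis .
qed

lemma cis_gauge: "cnj (cis e) * (cnj (cis k) * (cis p * cis t)) = cis (p + t - e - k)"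
proof -
  have "cnj (cis e) * (cnj (cis k) * (cis p * cis t)) = cis (-e) * cis (-k) * cis p * cis t"
    by (simp add: cis_cnj mult.assoc)
  also have "\<dots> = cis (-e + -k + p + t)"
    by (simp only: cis_mult)
  also have "-e + -k + p + t = p + t - e - k"
    by simp
  finally show ?thesis .
qed

lemma cis_eq_imp_eq:
  assumes "cis x = cis y" "x \<in> {0..<2*pi}" "y \<in> {0..<2*pi}"
  shows "x = y"
  using assms Arg2pi_unique[of 1 x "cis x"] Arg2pi_unique[of 1 y "cis y"]
  by (simp add: cis_conv_exp)

lemma unimodular_mult_pos_eq:
  assumes "cmod u = 1" "0 < x" "0 < y" "u * of_real x = of_real y"
  shows "u = 1" "x = y"
proof -
  have "cmod u * x = y"
    using arg_cong[OF assms(4), of cmod] assms(2,3) by (simp add: norm_mult)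
  then show xy: "x = y"
    using assms(1) by simp
  show "u = 1"
    using assms(2,4) unfolding xy by simp
qed

lemma gauge_phase_eq_1:
  assumes "cnj (E * x) * y * of_real s = of_real s'"
    and "cmod E = 1" "cmod x = 1" "cmod y = 1" "0 < s" "0 < s'"
  shows "cnj (E * x) * y = 1" "s = s'"
  using unimodular_mult_pos_eq[of "cnj (E * x) * y" s s'] assms by (simp_all add: norm_mult)

lemma gauge_phase_swap:
  assumes "cmod E = 1" "cmod x = 1" "cmod y = 1" "cnj (E * x) * y = 1"
  shows "cnj (E * y) * x = cnj E ^ 2"
proof -
  have "cnj x * x = 1" "cnj y * y = 1"
    using assms(2,3) by (simp_all add: cnj_mult_self_eq_1_iff)
  then show ?thesis
    using assms(4) by (simp add: power2_eq_square) algebra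
qed

lemma sqrt_one_minus_square_pos: "r \<in> {0<..<1} \<Longrightarrow> 0 < sqrt (1 - r\<^sup>2)"
  by (simp add: power_less_one_iff abs_square_less_1)

lemma vec2_eq_iff: "(x::'a^2) = y \<longleftrightarrow> x$1 = y$1 \<and> x$2 = y$2"
  by (simp add: vec_eq_iff forall_2)

lemma cinner_2: "cinner x y = cnj (x$1) * y$1 + cnj (x$2) * y$2"
  by (simp add: cinner_def sum_2)

lemma cinner_commute: "cinner y x = cnj (cinner x y)"
  by (simp add: cinner_2 mult.commute)

lemma cinner_self_cmod: "cinner x x = of_real ((cmod (x$1))\<^sup>2 + (cmod (x$2))\<^sup>2)"
  using complex_norm_square[of "x$1"] complex_norm_square[of "x$2"]
  by (simp add: cinner_2 mult.commute)

lemma cinner_self_norm: "cinner x x = of_real ((norm x)\<^sup>2)"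
  by (simp add: cinner_self_cmod norm_vec_def L2_set_def sum_2)

lemma unit_vector_cmod:
  assumes "cinner x x = 1"
  shows "cmod (x$2) = sqrt (1 - (cmod (x$1))\<^sup>2)" "cmod (x$1) \<le> 1"
proof -
  have sum: "(cmod (x$1))\<^sup>2 + (cmod (x$2))\<^sup>2 = 1"
    using assms of_real_eq_1_iff unfolding cinner_self_cmod by blast
  then have "1 - (cmod (x$1))\<^sup>2 = (cmod (x$2))\<^sup>2"
    by simp
  then show "cmod (x$2) = sqrt (1 - (cmod (x$1))\<^sup>2)"
    by simp
  show "cmod (x$1) \<le> 1"
    using sum by (metis abs_norm_cancel abs_square_le_1 le_add_same_cancel1 zero_le_power2)
qed

lemma matrix_vector_mult_2:
  "((M::'a::semiring_1^2^2) *v x)$1 = M$1$1 * x$1 + M$1$2 * x$2"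
  "(M *v x)$2 = M$2$1 * x$1 + M$2$2 * x$2"
  by (simp_all add: matrix_vector_mult_def sum_2)

lemma ket_bra_conj: "M ** ket_bra x y ** adj N = ket_bra (M *v x) (N *v y)"
  by (simp add: vec_eq_iff forall_2 matrix_matrix_mult_def sum_2 ket_bra_def adj_def
      matrix_vector_mult_def algebra_simps)

lemma scale_ket_bra: "(\<chi> i j. c * ket_bra (a *s x) y $ i $ j) = ket_bra x (cnj (c * a) *s y)"
  by (simp add: vec_eq_iff ket_bra_def algebra_simps)

lemma ket_bra_cancel_left:
  assumes "ket_bra x y = ket_bra x y'" "x \<noteq> 0"
  shows "y = y'"
proof -
  obtain i where "x $ i \<noteq> 0"
    using assms(2) by (auto simp: vec_eq_iff)
  then show ?thesis
    using arg_cong[OF assms(1), of "\<lambda>M. M $ i"] by (simp add: vec_eq_iff ket_bra_def)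
qed

lemma ket_bra_scaled_support:
  assumes "(\<chi> i j. E * ket_bra x y $ i $ j) = ket_bra x' y'" "y \<noteq> 0" "E \<noteq> 0" "x' $ i = 0"
  shows "x $ i = 0"
proof -
  obtain j where "y $ j \<noteq> 0"
    using assms(2) by (auto simp: vec_eq_iff)
  moreover have "E * x $ i * cnj (y $ j) = x' $ i * cnj (y' $ j)"
    using arg_cong[OF assms(1), of "\<lambda>M. M $ i $ j"] by (simp add: ket_bra_def mult.assoc)
  ultimately show ?thesis
    using assms(3,4) by simp
qed

lemma onb2_perp:
  assumes "onb2 x y"
  defines "d \<equiv> x$1 * y$2 - x$2 * y$1"
  shows "cmod d = 1" "y = d *s vector [- cnj (x$2), cnj (x$1)]"
proof -
  have x: "cnj (x$1) * x$1 + cnj (x$2) * x$2 = 1" and y: "cnj (y$1) * y$1 + cnj (y$2) * y$2 = 1"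
    and xy: "cnj (x$1) * y$1 + cnj (x$2) * y$2 = 0"
    using assms(1) by (auto simp: onb2_def cinner_2)
  have yx: "cnj (y$1) * x$1 + cnj (y$2) * x$2 = 0"
    using arg_cong[OF xy, of cnj] by (simp add: mult.commute)
  have y1: "y$1 = - d * cnj (x$2)" and y2: "y$2 = d * cnj (x$1)"
    unfolding d_def using x xy yx by algebra+
  have "cnj d * d * (cnj (x$1) * x$1 + cnj (x$2) * x$2) = cnj (y$1) * y$1 + cnj (y$2) * y$2"
    unfolding y1 y2 by (simp add: algebra_simps)
  then show "cmod d = 1"
    using x y by (simp add: cnj_mult_self_eq_1_iff)
  show "y = d *s vector [- cnj (x$2), cnj (x$1)]"
    using y1 y2 by (simp add: vec2_eq_iff)
qed

lemma onb2_polar: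
  assumes "onb2 v w"
  defines "a \<equiv> cmod (v$1)" and "\<delta> \<equiv> Arg (v$1 * w$2 - v$2 * w$1)"
  shows "v = vector [cis (Arg (v$1)) * a, cis (Arg (v$2)) * sqrt (1 - a\<^sup>2)]"
    "w = vector [- cis (\<delta> - Arg (v$2)) * sqrt (1 - a\<^sup>2), cis (\<delta> - Arg (v$1)) * a]"
proof -
  have s: "cmod (v$2) = sqrt (1 - a\<^sup>2)"
    using assms(1) unit_vector_cmod(1) unfolding a_def onb2_def by blast
  show v: "v = vector [cis (Arg (v$1)) * a, cis (Arg (v$2)) * sqrt (1 - a\<^sup>2)]"
    unfolding s[symmetric] by (simp add: a_def vec2_eq_iff cis_Arg_mult_cmod)
  have "cis \<delta> = v$1 * w$2 - v$2 * w$1"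
    using cis_Arg_mult_cmod[of "v$1 * w$2 - v$2 * w$1"] onb2_perp(1)[OF assms(1)]
    unfolding \<delta>_def by simp
  then have "w = cis \<delta> *s vector [- cnj (v$2), cnj (v$1)]"
    using onb2_perp(2)[OF assms(1)] by simp
  also have "\<dots> = vector [- cis (\<delta> - Arg (v$2)) * sqrt (1 - a\<^sup>2), cis (\<delta> - Arg (v$1)) * a]"
  proof -
    have "cnj (v$1) = cis (- Arg (v$1)) * a" "cnj (v$2) = cis (- Arg (v$2)) * sqrt (1 - a\<^sup>2)"
      using arg_cong[OF v, of "\<lambda>x. cnj (x$1)"] arg_cong[OF v, of "\<lambda>x. cnj (x$2)"]
      by (simp_all add: cis_cnj)
    then show ?thesis
      by (simp add: vec2_eq_iff cis_mult mult.assoc[symmetric])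
  qed
  finally show "w = vector [- cis (\<delta> - Arg (v$2)) * sqrt (1 - a\<^sup>2), cis (\<delta> - Arg (v$1)) * a]" .
qed

definition coords :: "cvec \<Rightarrow> cvec \<Rightarrow> cvec \<Rightarrow> cvec" where
  "coords x y z = vector [cinner x z, cinner y z]"

lemma cinner_coords:
  assumes "onb2 x y"
  shows "cinner (coords x y z) (coords x y w) = cinner z w"
proof -
  obtain d where d: "cnj d * d = 1" "y = d *s vector [- cnj (x$2), cnj (x$1)]"
    using onb2_perp[OF assms] cnj_mult_self_eq_1_iff by metis
  have x: "cnj (x$1) * x$1 + cnj (x$2) * x$2 = 1"
    using assms by (simp add: onb2_def cinner_2)
  show ?thesis
    unfolding coords_def cinner_2 d(2) using d(1) x by (simp add: algebra_simps) algebra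
qed

lemma onb2_coords: "onb2 x y \<Longrightarrow> onb2 z w \<Longrightarrow> onb2 (coords x y z) (coords x y w)"
  by (simp add: onb2_def cinner_coords)

lemma onb2_standard: "onb2 e1 e2"
  by (simp add: onb2_def cinner_2 e1_def e2_def)

lemma coords_standard: "coords e1 e2 z = z"
  by (simp add: coords_def vec2_eq_iff cinner_2 e1_def e2_def)

definition frame_matrix :: "complex \<Rightarrow> complex \<Rightarrow> cvec \<Rightarrow> cvec \<Rightarrow> cmat" where
  "frame_matrix p q x y = (\<chi> i j. if i = 1 then p * cnj (x$j) else q * cnj (y$j))"

lemma frame_matrix_mult: "frame_matrix p q x y *v z = vector [p * cinner x z, q * cinner y z]"
  by (simp add: vec2_eq_iff matrix_vector_mult_2 frame_matrix_def cinner_2 algebra_simps)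

lemma frame_matrix_basis:
  assumes "onb2 x y"
  shows "frame_matrix p q x y *v x = p *s e1" "frame_matrix p q x y *v y = q *s e2"
  using assms cinner_commute[of x y]
  by (simp_all add: frame_matrix_mult onb2_def vec2_eq_iff e1_def e2_def)

lemma cinner_frame_matrix:
  assumes "cmod p = 1" "cmod q = 1" "onb2 x y"
  shows "cinner (frame_matrix p q x y *v z) (frame_matrix p q x y *v z') = cinner z z'"
proof -
  have "cnj p * p = 1" "cnj q * q = 1"
    using assms(1,2) by (simp_all add: cnj_mult_self_eq_1_iff)
  then have "cinner (frame_matrix p q x y *v z) (frame_matrix p q x y *v z') =
      cinner (coords x y z) (coords x y z')"
    unfolding frame_matrix_mult coords_def cinner_2 by simp algebra
  also have "\<dots> = cinner z z'"
    by (rule cinner_coords[OF assms(3)])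
  finally show ?thesis .
qed

lemma unitary2_iff: "unitary2 W \<longleftrightarrow> W ** adj W = mat 1"
  unfolding unitary2_def by (metis matrix_left_right_inverse)

lemma frame_matrix_unitary:
  assumes "cmod p = 1" "cmod q = 1" "onb2 x y"
  shows "unitary2 (frame_matrix p q x y)"
proof -
  have pq: "cnj p * p = 1" "cnj q * q = 1"
    using assms(1,2) by (simp_all add: cnj_mult_self_eq_1_iff)
  have "cinner x x = 1" "cinner y y = 1" "cinner x y = 0" "cinner y x = 0"
    using assms(3) cinner_commute[of x y] by (simp_all add: onb2_def)
  then have xy: "cnj (x$1) * x$1 + cnj (x$2) * x$2 = 1" "cnj (y$1) * y$1 + cnj (y$2) * y$2 = 1"
    "cnj (x$1) * y$1 + cnj (x$2) * y$2 = 0" "cnj (y$1) * x$1 + cnj (y$2) * x$2 = 0"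
    by (simp_all add: cinner_2)
  show ?thesis
    unfolding unitary2_iff
    by (simp add: vec2_eq_iff matrix_matrix_mult_def sum_2 adj_def frame_matrix_def mat_def)
      (use pq xy in algebra)
qed

lemma unitary2_mult_vec_eq_0: "unitary2 W \<Longrightarrow> W *v x = 0 \<Longrightarrow> x = 0"
  by (metis unitary2_def matrix_vector_mul_assoc matrix_vector_mul_lid matrix_vector_mult_0_right)

lemma unitary2_diagonal:
  assumes "unitary2 W" "W $ 1 $ 2 = 0" "W $ 2 $ 1 = 0"
  shows "W = frame_matrix (W $ 1 $ 1) (W $ 2 $ 2) e1 e2" "cmod (W $ 1 $ 1) = 1" "cmod (W $ 2 $ 2) = 1"
proof -
  show "W = frame_matrix (W $ 1 $ 1) (W $ 2 $ 2) e1 e2"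
    using assms(2,3) by (simp add: vec2_eq_iff frame_matrix_def e1_def e2_def)
  have "(W ** adj W) $ 1 $ 1 = 1" "(W ** adj W) $ 2 $ 2 = 1"
    using assms(1) by (simp_all add: unitary2_def mat_def)
  then show "cmod (W $ 1 $ 1) = 1" "cmod (W $ 2 $ 2) = 1"
    using assms(2,3) by (simp_all add: matrix_matrix_mult_def sum_2 adj_def mult.commute
        flip: cnj_mult_self_eq_1_iff)
qed

section \<open>Walks given by their hopping vectors, and gauge transformations\<close>

definition walk_blocks ::
  "(int \<Rightarrow> cvec) \<Rightarrow> (int \<Rightarrow> cvec) \<Rightarrow> (int \<Rightarrow> cvec) \<Rightarrow> (int \<Rightarrow> cvec) \<Rightarrow> blockop" where
  "walk_blocks xr xl zl zr n m =
     (if n = m - 1 then ket_bra (xr n) (zl m)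
      else if n = m + 1 then ket_bra (xl n) (zr m) else 0)"

lemma walk_repr_iff:
  "walk_repr B xr xl zl zr \<longleftrightarrow>
     (\<forall>n. onb2 (xr n) (xl n) \<and> onb2 (zl n) (zr n)) \<and> B = walk_blocks xr xl zl zr"
  by (simp add: walk_repr_def walk_blocks_def fun_eq_iff)

lemma walk_blocks_standard_inj:
  assumes "walk_blocks (\<lambda>_. e1) (\<lambda>_. e2) v w = walk_blocks (\<lambda>_. e1) (\<lambda>_. e2) v' w'"
  shows "v = v'" "w = w'"
proof -
  have "e1 \<noteq> 0" "e2 \<noteq> 0"
    by (simp_all add: e1_def e2_def vec2_eq_iff)
  moreover have "ket_bra e1 (v m) = ket_bra e1 (v' m)" "ket_bra e2 (w m) = ket_bra e2 (w' m)" for m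
    using fun_cong[OF fun_cong[OF assms, of "m - 1"], of m] fun_cong[OF fun_cong[OF assms, of "m + 1"], of m]
    by (simp_all add: walk_blocks_def)
  ultimately show "v = v'" "w = w'"
    using ket_bra_cancel_left by fastforce+
qed

lemma Uq_eq_walk_blocks:
  "Uq rp rm r0 m1 m2 m3 = walk_blocks (\<lambda>_. e1) (\<lambda>_. e2) (Uq_v rp rm r0 m1) (Uq_w rp rm r0 m1 m2 m3)"
  by (simp add: fun_eq_iff Uq_def walk_blocks_def)

lemma Uq_v_cis:
  "Uq_v rp rm r0 m1 n =
     (if n = 0 then vector [of_real r0, cis m1 * sqrt (1 - r0\<^sup>2)]
      else if n \<ge> 1 then vector [of_real rp, of_real (sqrt (1 - rp\<^sup>2))]
      else vector [of_real rm, of_real (sqrt (1 - rm\<^sup>2))])"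
  by (simp add: Uq_v_def cis_conv_exp)

lemma Uq_w_cis:
  "Uq_w rp rm r0 m1 m2 m3 n =
     (if n = 0 then vector [- cis m2 * sqrt (1 - r0\<^sup>2), cis (m1 + m2) * r0]
      else if n \<ge> 1 then vector [- cis m3 * sqrt (1 - rp\<^sup>2), cis m3 * rp]
      else vector [- of_real (sqrt (1 - rm\<^sup>2)), of_real rm])"
  by (simp add: Uq_w_def cis_conv_exp)

lemma Uq_v_nonzero: "0 < rp \<Longrightarrow> 0 < rm \<Longrightarrow> 0 < r0 \<Longrightarrow> Uq_v rp rm r0 m1 m \<noteq> 0"
  by (simp add: Uq_v_cis vec2_eq_iff)

lemma Uq_w_nonzero: "0 < rp \<Longrightarrow> 0 < rm \<Longrightarrow> 0 < r0 \<Longrightarrow> Uq_w rp rm r0 m1 m2 m3 m \<noteq> 0"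
  by (simp add: Uq_w_cis vec2_eq_iff)

text \<open>Hopping vectors of \<open>walk_blocks (\<lambda>_. e1) (\<lambda>_. e2) v w\<close> after conjugation by the diagonal
  unitary \<open>diag (p n) (q n)\<close> at every site n and multiplication by the phase E.\<close>

definition gauge_v ::
  "complex \<Rightarrow> (int \<Rightarrow> complex) \<Rightarrow> (int \<Rightarrow> complex) \<Rightarrow> (int \<Rightarrow> cvec) \<Rightarrow> int \<Rightarrow> cvec" where
  "gauge_v E p q v m = cnj (E * p (m - 1)) *s vector [p m * v m $ 1, q m * v m $ 2]"

definition gauge_w ::
  "complex \<Rightarrow> (int \<Rightarrow> complex) \<Rightarrow> (int \<Rightarrow> complex) \<Rightarrow> (int \<Rightarrow> cvec) \<Rightarrow> int \<Rightarrow> cvec" where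
  "gauge_w E p q w m = cnj (E * q (m + 1)) *s vector [p m * w m $ 1, q m * w m $ 2]"

lemma gauge_v_nth:
  "gauge_v E p q v m $ 1 = cnj (E * p (m - 1)) * p m * v m $ 1"
  "gauge_v E p q v m $ 2 = cnj (E * p (m - 1)) * q m * v m $ 2"
  by (simp_all add: gauge_v_def mult.assoc)

lemma gauge_w_nth:
  "gauge_w E p q w m $ 1 = cnj (E * q (m + 1)) * p m * w m $ 1"
  "gauge_w E p q w m $ 2 = cnj (E * q (m + 1)) * q m * w m $ 2"
  by (simp_all add: gauge_w_def mult.assoc)

lemma walk_blocks_gauge:
  fixes p q :: "int \<Rightarrow> complex"
  assumes "\<And>n. onb2 (xr n) (xl n)"
  defines "W \<equiv> \<lambda>n. frame_matrix (p n) (q n) (xr n) (xl n)"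
  shows "(\<chi> i j. E * (W n ** walk_blocks xr xl zl zr n m ** adj (W m)) $ i $ j) =
    walk_blocks (\<lambda>_. e1) (\<lambda>_. e2)
      (gauge_v E p q (\<lambda>k. coords (xr k) (xl k) (zl k)))
      (gauge_w E p q (\<lambda>k. coords (xr k) (xl k) (zr k))) n m"
proof -
  have W_coords: "W k *v z = vector [p k * coords (xr k) (xl k) z $ 1, q k * coords (xr k) (xl k) z $ 2]"
    for k z
    by (simp add: W_def frame_matrix_mult coords_def)
  consider "n = m - 1" | "n = m + 1" | "n \<noteq> m - 1" "n \<noteq> m + 1"
    by blast
  then show ?thesis
  proof cases
    case 1
    then show ?thesis
      by (simp add: walk_blocks_def ket_bra_conj W_def frame_matrix_basis[OF assms(1)]
          scale_ket_bra gauge_v_def W_coords[unfolded W_def])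
  next
    case 2
    then have "n \<noteq> m - 1"
      by simp
    with 2 show ?thesis
      by (simp add: walk_blocks_def ket_bra_conj W_def frame_matrix_basis[OF assms(1)]
          scale_ket_bra gauge_w_def W_coords[unfolded W_def])
  next
    case 3
    then show ?thesis
      by (simp add: walk_blocks_def vec_eq_iff)
  qed
qed

lemma unit_equiv_refl: "unit_equiv B \<Phi> B \<Phi>"
proof -
  have adj_id: "adj (mat 1) = mat 1"
    by (simp add: vec_eq_iff adj_def mat_def)
  show ?thesis
    unfolding unit_equiv_def
    by (intro exI[of _ 0] exI[of _ "\<lambda>_. mat 1"]) (simp add: adj_id unitary2_def vec_eq_iff)
qed

lemma standard_walk_equiv_gauge:
  assumes nz: "\<And>m. v m \<noteq> 0" "\<And>m. w m \<noteq> 0"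
    and equiv: "unit_equiv (walk_blocks (\<lambda>_. e1) (\<lambda>_. e2) v w) \<Phi> (walk_blocks (\<lambda>_. e1) (\<lambda>_. e2) v' w') \<Phi>'"
  obtains E a b c where "cmod E = 1" "\<And>k. cmod (a k) = 1" "\<And>k. cmod (b k) = 1" "cmod c = 1"
    "v' = gauge_v E a b v" "w' = gauge_w E a b w" "\<Phi>' = c *s vector [a 0 * \<Phi> $ 1, b 0 * \<Phi> $ 2]"
proof -
  obtain l l' W where U: "\<And>n. unitary2 (W n)"
    and H: "\<And>n m. (\<chi> i j. exp (\<i> * of_real l) *
      (W n ** walk_blocks (\<lambda>_. e1) (\<lambda>_. e2) v w n m ** adj (W m)) $ i $ j) =
      walk_blocks (\<lambda>_. e1) (\<lambda>_. e2) v' w' n m"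
    and H\<Phi>: "(\<chi> i. exp (\<i> * of_real l') * (W 0 *v \<Phi>) $ i) = \<Phi>'"
    using equiv unfolding unit_equiv_def by blast
  define E where "E = exp (\<i> * of_real l)"
  have "E \<noteq> 0"
    by (simp add: E_def)
  have "(\<chi> i j. E * ket_bra (W k *v e1) (W (k + 1) *v v (k + 1)) $ i $ j) = ket_bra e1 (v' (k + 1))"
    and "(\<chi> i j. E * ket_bra (W k *v e2) (W (k - 1) *v w (k - 1)) $ i $ j) = ket_bra e2 (w' (k - 1))"
    for k
    using H[of k "k + 1"] H[of k "k - 1"] by (simp_all add: E_def walk_blocks_def ket_bra_conj)
  moreover have "e1 $ 2 = 0" "e2 $ 1 = 0"
    by (simp_all add: e1_def e2_def)
  ultimately have "(W k *v e1) $ 2 = 0" "(W k *v e2) $ 1 = 0" for k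
    using ket_bra_scaled_support unitary2_mult_vec_eq_0[OF U] nz \<open>E \<noteq> 0\<close> by metis+
  then have off_diag: "W k $ 1 $ 2 = 0" "W k $ 2 $ 1 = 0" for k
    by (simp_all add: matrix_vector_mult_2 e1_def e2_def)
  define a where "a k = W k $ 1 $ 1" for k
  define b where "b k = W k $ 2 $ 2" for k
  have W: "W k = frame_matrix (a k) (b k) e1 e2" and unimod: "cmod (a k) = 1" "cmod (b k) = 1" for k
    using unitary2_diagonal[OF U off_diag] by (simp_all add: a_def b_def)
  have "walk_blocks (\<lambda>_. e1) (\<lambda>_. e2) (gauge_v E a b v) (gauge_w E a b w) =
      walk_blocks (\<lambda>_. e1) (\<lambda>_. e2) v' w'"
    using H walk_blocks_gauge[where xr = "\<lambda>_. e1" and xl = "\<lambda>_. e2" and p = a and q = b and E = E,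
        OF onb2_standard]
    by (simp add: fun_eq_iff W coords_standard E_def)
  then have "v' = gauge_v E a b v" "w' = gauge_w E a b w"
    using walk_blocks_standard_inj by metis+
  moreover have "\<Phi>' = exp (\<i> * of_real l') *s vector [a 0 * \<Phi> $ 1, b 0 * \<Phi> $ 2]"
    using H\<Phi> by (simp add: W frame_matrix_mult cinner_2 e1_def e2_def vec_eq_iff forall_2)
  ultimately show thesis
    using that[of "exp (\<i> * of_real l)" a b "exp (\<i> * of_real l')"] unimod by (simp add: E_def)
qed

section \<open>Existence of the normal form\<close>

lemma int_antidifference:
  fixes g :: "int \<Rightarrow> 'a::ab_group_add"
  obtains f where "\<And>m. f m = f (m - 1) + g m"
proof
  define F where "F k = (\<Sum>i<k. g (int i + 1))" for k
  define G where "G k = (\<Sum>i<k. g (- int i))" for k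
  define f where "f m = (if m \<ge> 0 then F (nat m) else - G (nat (- m)))" for m
  show "f m = f (m - 1) + g m" for m
  proof (cases "m \<ge> 1")
    case True
    then have "nat m = Suc (nat (m - 1))"
      by simp
    with True show ?thesis
      by (simp add: f_def F_def)
  next
    case False
    then have "nat (1 - m) = Suc (nat (- m))"
      by simp
    with False show ?thesis
      by (simp add: f_def F_def G_def)
  qed
qed

lemma gauge_polar:
  fixes a s \<alpha> \<beta> \<delta> \<pi> \<kappa> :: "int \<Rightarrow> real"
  assumes "\<And>n. v n = vector [cis (\<alpha> n) * a n, cis (\<beta> n) * s n]"
    and "\<And>n. w n = vector [- cis (\<delta> n - \<beta> n) * s n, cis (\<delta> n - \<alpha> n) * a n]"
  shows "gauge_v (cis \<epsilon>) (\<lambda>m. cis (\<pi> m)) (\<lambda>m. cis (\<kappa> m)) v m =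
      vector [cis (\<pi> m + \<alpha> m - \<epsilon> - \<pi> (m - 1)) * a m, cis (\<kappa> m + \<beta> m - \<epsilon> - \<pi> (m - 1)) * s m]"
    "gauge_w (cis \<epsilon>) (\<lambda>m. cis (\<pi> m)) (\<lambda>m. cis (\<kappa> m)) w m =
      vector [- cis (\<pi> m + (\<delta> m - \<beta> m) - \<epsilon> - \<kappa> (m + 1)) * s m,
              cis (\<kappa> m + (\<delta> m - \<alpha> m) - \<epsilon> - \<kappa> (m + 1)) * a m]"
  using assms by (simp_all add: gauge_v_def gauge_w_def vec2_eq_iff cis_gauge)

text \<open>The left-hand sides are the angles by which the gauge \<open>cis \<pi>, cis \<kappa>, cis \<epsilon>\<close> rotates the four
  entries of the hopping vectors of coins in polar form, as computed in \<open>gauge_polar\<close>.\<close>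

lemma phase_matching_solvable:
  fixes \<alpha> \<beta> \<delta> :: "int \<Rightarrow> real"
  assumes pos: "\<And>n. n \<ge> 1 \<Longrightarrow> \<alpha> n = \<alpha> 1 \<and> \<beta> n = \<beta> 1 \<and> \<delta> n = \<delta> 1"
    and neg: "\<And>n. n \<le> -1 \<Longrightarrow> \<alpha> n = \<alpha> (-1) \<and> \<beta> n = \<beta> (-1) \<and> \<delta> n = \<delta> (-1)"
  defines "\<mu>1 \<equiv> \<beta> 0 - \<beta> (-1)" and "\<mu>2 \<equiv> \<delta> 0 - \<delta> (-1) + \<beta> 1 - \<beta> 0" and "\<mu>3 \<equiv> \<delta> 1 - \<delta> (-1)"
  obtains \<pi> \<epsilon> \<kappa> where
    "\<And>m. \<pi> m + \<alpha> m - \<epsilon> - \<pi> (m - 1) = 0"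
    "\<And>m. \<kappa> m + \<beta> m - \<epsilon> - \<pi> (m - 1) = (if m = 0 then \<mu>1 else 0)"
    "\<And>m. \<pi> m + (\<delta> m - \<beta> m) - \<epsilon> - \<kappa> (m + 1) = (if m = 0 then \<mu>2 else if m \<ge> 1 then \<mu>3 else 0)"
    "\<And>m. \<kappa> m + (\<delta> m - \<alpha> m) - \<epsilon> - \<kappa> (m + 1) =
       (if m = 0 then \<mu>1 + \<mu>2 else if m \<ge> 1 then \<mu>3 else 0)"
proof -
  define \<epsilon> where "\<epsilon> = \<delta> (-1) / 2"
  have \<delta>_neg: "\<delta> (-1) = \<epsilon> + \<epsilon>"
    by (simp add: \<epsilon>_def)
  obtain \<pi> where \<pi>: "\<And>m. \<pi> m = \<pi> (m - 1) + (\<epsilon> - \<alpha> m)"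
    using int_antidifference[of "\<lambda>m. \<epsilon> - \<alpha> m"] by blast
  define \<kappa> where "\<kappa> m = \<pi> (m - 1) + \<epsilon> - \<beta> m + (if m = 0 then \<mu>1 else 0)" for m
  show thesis
  proof (rule that)
    show "\<pi> m + \<alpha> m - \<epsilon> - \<pi> (m - 1) = 0" for m
      using \<pi>[of m] by simp
    show "\<kappa> m + \<beta> m - \<epsilon> - \<pi> (m - 1) = (if m = 0 then \<mu>1 else 0)" for m
      by (simp add: \<kappa>_def)
    show "\<pi> m + (\<delta> m - \<beta> m) - \<epsilon> - \<kappa> (m + 1) = (if m = 0 then \<mu>2 else if m \<ge> 1 then \<mu>3 else 0)"
      and "\<kappa> m + (\<delta> m - \<alpha> m) - \<epsilon> - \<kappa> (m + 1) =
       (if m = 0 then \<mu>1 + \<mu>2 else if m \<ge> 1 then \<mu>3 else 0)" for m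
      using \<pi>[of m] \<pi>[of "m + 1"] pos[of m] pos[of "m + 1"] neg[of m] neg[of "m + 1"] \<delta>_neg
      by (auto simp: \<kappa>_def \<mu>1_def \<mu>2_def \<mu>3_def)
  qed
qed

lemma two_phase_coins_normal_form:
  assumes onb: "\<And>n. onb2 (v n) (w n)"
    and pos: "\<And>n. n \<ge> 1 \<Longrightarrow> v n = v 1 \<and> w n = w 1"
    and neg: "\<And>n. n \<le> -1 \<Longrightarrow> v n = v (-1) \<and> w n = w (-1)"
  obtains l \<mu>1 \<mu>2 \<mu>3 and p q :: "int \<Rightarrow> complex"
  where "\<And>n. cmod (p n) = 1" "\<And>n. cmod (q n) = 1"
    "gauge_v (cis l) p q v = Uq_v (cmod (v 1 $ 1)) (cmod (v (-1) $ 1)) (cmod (v 0 $ 1)) \<mu>1"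
    "gauge_w (cis l) p q w = Uq_w (cmod (v 1 $ 1)) (cmod (v (-1) $ 1)) (cmod (v 0 $ 1)) \<mu>1 \<mu>2 \<mu>3"
proof -
  define a where "a n = cmod (v n $ 1)" for n
  define s where "s n = sqrt (1 - (a n)\<^sup>2)" for n
  define \<alpha> where "\<alpha> n = Arg (v n $ 1)" for n
  define \<beta> where "\<beta> n = Arg (v n $ 2)" for n
  define \<delta> where "\<delta> n = Arg (v n $ 1 * w n $ 2 - v n $ 2 * w n $ 1)" for n
  have polar: "v n = vector [cis (\<alpha> n) * a n, cis (\<beta> n) * s n]"
    "w n = vector [- cis (\<delta> n - \<beta> n) * s n, cis (\<delta> n - \<alpha> n) * a n]" for n
    using onb2_polar[OF onb[of n]] unfolding a_def s_def \<alpha>_def \<beta>_def \<delta>_def by auto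
  have a_pos: "n \<ge> 1 \<Longrightarrow> a n = a 1" and a_neg: "n \<le> -1 \<Longrightarrow> a n = a (-1)" for n
    using pos[of n] neg[of n] by (auto simp: a_def)
  show thesis
  proof (rule phase_matching_solvable[of \<alpha> \<beta> \<delta>])
    show "\<alpha> n = \<alpha> 1 \<and> \<beta> n = \<beta> 1 \<and> \<delta> n = \<delta> 1" if "n \<ge> 1" for n
      using pos[OF that] by (simp add: \<alpha>_def \<beta>_def \<delta>_def)
    show "\<alpha> n = \<alpha> (-1) \<and> \<beta> n = \<beta> (-1) \<and> \<delta> n = \<delta> (-1)" if "n \<le> -1" for n
      using neg[OF that] by (simp add: \<alpha>_def \<beta>_def \<delta>_def)
    fix \<pi> \<epsilon> \<kappa>
    assume angles:
      "\<And>m. \<pi> m + \<alpha> m - \<epsilon> - \<pi> (m - 1) = 0"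
      "\<And>m. \<kappa> m + \<beta> m - \<epsilon> - \<pi> (m - 1) = (if m = 0 then \<beta> 0 - \<beta> (-1) else 0)"
      "\<And>m. \<pi> m + (\<delta> m - \<beta> m) - \<epsilon> - \<kappa> (m + 1) =
         (if m = 0 then \<delta> 0 - \<delta> (-1) + \<beta> 1 - \<beta> 0 else if m \<ge> 1 then \<delta> 1 - \<delta> (-1) else 0)"
      "\<And>m. \<kappa> m + (\<delta> m - \<alpha> m) - \<epsilon> - \<kappa> (m + 1) =
         (if m = 0 then \<beta> 0 - \<beta> (-1) + (\<delta> 0 - \<delta> (-1) + \<beta> 1 - \<beta> 0)
          else if m \<ge> 1 then \<delta> 1 - \<delta> (-1) else 0)"
    have "gauge_v (cis \<epsilon>) (\<lambda>m. cis (\<pi> m)) (\<lambda>m. cis (\<kappa> m)) v m =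
        Uq_v (a 1) (a (-1)) (a 0) (\<beta> 0 - \<beta> (-1)) m"
      and "gauge_w (cis \<epsilon>) (\<lambda>m. cis (\<pi> m)) (\<lambda>m. cis (\<kappa> m)) w m =
        Uq_w (a 1) (a (-1)) (a 0) (\<beta> 0 - \<beta> (-1)) (\<delta> 0 - \<delta> (-1) + \<beta> 1 - \<beta> 0) (\<delta> 1 - \<delta> (-1)) m"
      for m
      unfolding gauge_polar[OF polar] angles
      using a_pos[of m] a_neg[of m] by (simp_all add: Uq_v_cis Uq_w_cis s_def)
    then show thesis
      using that[of "\<lambda>m. cis (\<pi> m)" "\<lambda>m. cis (\<kappa> m)" \<epsilon> "\<beta> 0 - \<beta> (-1)"
          "\<delta> 0 - \<delta> (-1) + \<beta> 1 - \<beta> 0" "\<delta> 1 - \<delta> (-1)"]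
      unfolding a_def by (simp add: fun_eq_iff)
  qed
qed

lemma unit_vector_phase_normal_form:
  assumes "cinner x x = 1"
  shows "(\<chi> i. exp (\<i> * of_real (- Arg (x$1))) * x $ i) = Phiq (cmod (x$1)) (Arg (x$2) - Arg (x$1))"
proof -
  have "cis (- Arg (x$1)) * x$2 = cis (- Arg (x$1)) * cis (Arg (x$2)) * cmod (x$2)"
    by (simp add: cis_Arg_mult_cmod mult.assoc)
  also have "\<dots> = cis (Arg (x$2) - Arg (x$1)) * sqrt (1 - (cmod (x$1))\<^sup>2)"
    by (simp add: cis_mult unit_vector_cmod(1)[OF assms])
  finally show ?thesis
    using cis_minus_Arg_mult[of "x$1"]
    unfolding Phiq_def cis_conv_exp[symmetric] by (simp add: vec2_eq_iff)
qed

lemma walk_repr_gauge_equiv: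
  assumes repr: "walk_repr B xr xl zl zr"
    and p: "\<And>n. cmod (p n) = 1" and q: "\<And>n. cmod (q n) = 1" and "norm \<Phi> = 1"
  obtains \<alpha> \<theta> where "0 \<le> \<alpha>" "\<alpha> \<le> 1"
    "unit_equiv B \<Phi> (walk_blocks (\<lambda>_. e1) (\<lambda>_. e2)
      (gauge_v (cis l) p q (\<lambda>k. coords (xr k) (xl k) (zl k)))
      (gauge_w (cis l) p q (\<lambda>k. coords (xr k) (xl k) (zr k)))) (Phiq \<alpha> \<theta>)"
proof -
  let ?U = "walk_blocks (\<lambda>_. e1) (\<lambda>_. e2)
    (gauge_v (cis l) p q (\<lambda>k. coords (xr k) (xl k) (zl k)))
    (gauge_w (cis l) p q (\<lambda>k. coords (xr k) (xl k) (zr k)))"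
  have onb: "\<And>n. onb2 (xr n) (xl n)" and B: "B = walk_blocks xr xl zl zr"
    using repr by (simp_all add: walk_repr_iff)
  define W where "W n = frame_matrix (p n) (q n) (xr n) (xl n)" for n
  define x where "x = W 0 *v \<Phi>"
  have x: "cinner x x = 1"
    using assms(4) cinner_frame_matrix[OF p[of 0] q[of 0] onb[of 0]] cinner_self_norm[of \<Phi>]
    by (simp add: x_def W_def)
  have "unitary2 (W n)" for n
    unfolding W_def using p q onb by (rule frame_matrix_unitary)
  moreover have "(\<chi> i j. exp (\<i> * of_real l) * (W n ** B n m ** adj (W m)) $ i $ j) = ?U n m" for n m
    using walk_blocks_gauge[where p = p and q = q and E = "cis l", OF onb]
    by (simp add: B W_def cis_conv_exp)
  moreover have "(\<chi> i. exp (\<i> * of_real (- Arg (x$1))) * (W 0 *v \<Phi>) $ i) =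
      Phiq (cmod (x$1)) (Arg (x$2) - Arg (x$1))"
    using x unfolding x_def by (rule unit_vector_phase_normal_form)
  ultimately have "unit_equiv B \<Phi> ?U (Phiq (cmod (x$1)) (Arg (x$2) - Arg (x$1)))"
    unfolding unit_equiv_def by blast
  then show thesis
    by (rule that[rotated 2]) (simp_all add: unit_vector_cmod(2)[OF x])
qed

lemma two_phase_walk_normal_form:
  assumes "two_phase_one_defect B" "norm \<Phi> = 1"
  shows "\<exists>rp rm r0 \<alpha> m1 m2 m3 \<theta>.
    0 \<le> rp \<and> rp \<le> 1 \<and> 0 \<le> rm \<and> rm \<le> 1 \<and> 0 \<le> r0 \<and> r0 \<le> 1 \<and> 0 \<le> \<alpha> \<and> \<alpha> \<le> 1 \<and>
    unit_equiv B \<Phi> (Uq rp rm r0 m1 m2 m3) (Phiq \<alpha> \<theta>)"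
proof -
  obtain xr xl zl zr x1p x2p z1p z2p x1m x2m z1m z2m where
    repr: "walk_repr B xr xl zl zr"
    and pos: "\<forall>n\<ge>1. xr n = x1p \<and> xl n = x2p \<and> zl n = z1p \<and> zr n = z2p"
    and neg: "\<forall>n\<le>-1. xr n = x1m \<and> xl n = x2m \<and> zl n = z1m \<and> zr n = z2m"
    using assms(1) unfolding two_phase_one_defect_def by blast
  define v where "v n = coords (xr n) (xl n) (zl n)" for n
  define w where "w n = coords (xr n) (xl n) (zr n)" for n
  have onb_vw: "onb2 (v n) (w n)" for n
    using repr onb2_coords by (simp add: walk_repr_iff v_def w_def)
  show ?thesis
  proof (rule two_phase_coins_normal_form[of v w])
    show "onb2 (v n) (w n)" for n
      by (rule onb_vw)
    show "v n = v 1 \<and> w n = w 1" if "n \<ge> 1" for n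
      using pos that by (simp add: v_def w_def)
    show "v n = v (-1) \<and> w n = w (-1)" if "n \<le> -1" for n
      using neg that by (simp add: v_def w_def)
    fix l \<mu>1 \<mu>2 \<mu>3 and p q :: "int \<Rightarrow> complex"
    assume p: "\<And>n. cmod (p n) = 1" and q: "\<And>n. cmod (q n) = 1"
      and gv: "gauge_v (cis l) p q v = Uq_v (cmod (v 1 $ 1)) (cmod (v (-1) $ 1)) (cmod (v 0 $ 1)) \<mu>1"
      and gw: "gauge_w (cis l) p q w = Uq_w (cmod (v 1 $ 1)) (cmod (v (-1) $ 1)) (cmod (v 0 $ 1)) \<mu>1 \<mu>2 \<mu>3"
    obtain \<alpha> \<theta> where "0 \<le> \<alpha>" "\<alpha> \<le> 1" and
      "unit_equiv B \<Phi> (walk_blocks (\<lambda>_. e1) (\<lambda>_. e2) (gauge_v (cis l) p q v) (gauge_w (cis l) p q w))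
        (Phiq \<alpha> \<theta>)"
      unfolding v_def[abs_def] w_def[abs_def] by (rule walk_repr_gauge_equiv[OF repr p q assms(2)])
    moreover have "cmod (v n $ 1) \<le> 1" for n
      using onb_vw[of n] by (simp add: onb2_def unit_vector_cmod(2))
    ultimately show ?thesis
      unfolding gv gw Uq_eq_walk_blocks[symmetric] by (meson norm_ge_zero)
  qed
qed

section \<open>Uniqueness of the normal form\<close>

lemma Uq_gauge_radii:
  assumes r: "rp \<in> {0<..<1}" "rm \<in> {0<..<1}" "r0 \<in> {0<..<1}"
    "rp' \<in> {0<..<1}" "rm' \<in> {0<..<1}" "r0' \<in> {0<..<1}"
    and unimod: "cmod E = 1" "\<And>k. cmod (a k) = 1"
    and v: "Uq_v rp' rm' r0' m1' = gauge_v E a b (Uq_v rp rm r0 m1)"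
  shows "rp = rp'" "rm = rm'" "r0 = r0'" "cnj (E * a (-1)) * a 0 = 1"
proof -
  have V: "Uq_v rp' rm' r0' m1' m $ 1 = cnj (E * a (m - 1)) * a m * Uq_v rp rm r0 m1 m $ 1" for m
    by (simp add: v gauge_v_nth)
  have pos: "0 < rp" "0 < rm" "0 < r0" "0 < rp'" "0 < rm'" "0 < r0'"
    using r by simp_all
  have "cnj (E * a 0) * a 1 * of_real rp = of_real rp'"
    using V[of 1] by (simp add: Uq_v_cis)
  from gauge_phase_eq_1(2)[OF this unimod(1) unimod(2) unimod(2) pos(1,4)] show "rp = rp'" .
  have "cnj (E * a (-2)) * a (-1) * of_real rm = of_real rm'"
    using V[of "-1"] by (simp add: Uq_v_cis)
  from gauge_phase_eq_1(2)[OF this unimod(1) unimod(2) unimod(2) pos(2,5)] show "rm = rm'" .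
  have "cnj (E * a (-1)) * a 0 * of_real r0 = of_real r0'"
    using V[of 0] by (simp add: Uq_v_cis)
  from gauge_phase_eq_1[OF this unimod(1) unimod(2) unimod(2) pos(3,6)]
  show "r0 = r0'" "cnj (E * a (-1)) * a 0 = 1"
    by simp_all
qed

text \<open>The two hops between the sites -2 and -1 force \<open>E\<^sup>2 = 1\<close>, after which \<open>gauge_phase_swap\<close>
  reverses the gauge phases of the hops next to the defect.\<close>

lemma Uq_gauge_phases:
  assumes r: "rp \<in> {0<..<1}" "rm \<in> {0<..<1}" "r0 \<in> {0<..<1}"
    "rp' \<in> {0<..<1}" "rm' \<in> {0<..<1}" "r0' \<in> {0<..<1}"
    and unimod: "cmod E = 1" "\<And>k. cmod (a k) = 1" "\<And>k. cmod (b k) = 1"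
    and v: "Uq_v rp' rm' r0' m1' = gauge_v E a b (Uq_v rp rm r0 m1)"
    and w: "Uq_w rp' rm' r0' m1' m2' m3' = gauge_w E a b (Uq_w rp rm r0 m1 m2 m3)"
  shows "b 0 = a 0" "cnj (E * a (-1)) * b 0 = 1" "cnj (E * b 1) * a 0 = 1" "cnj (E * b 2) * a 1 = 1"
proof -
  have V: "Uq_v rp' rm' r0' m1' m $ 2 = cnj (E * a (m - 1)) * b m * Uq_v rp rm r0 m1 m $ 2"
    and W: "Uq_w rp' rm' r0' m1' m2' m3' m $ 1 = cnj (E * b (m + 1)) * a m * Uq_w rp rm r0 m1 m2 m3 m $ 1"
    for m
    by (simp_all add: v w gauge_v_nth gauge_w_nth)
  have s: "0 < sqrt (1 - rp\<^sup>2)" "0 < sqrt (1 - rm\<^sup>2)" "0 < sqrt (1 - rp'\<^sup>2)" "0 < sqrt (1 - rm'\<^sup>2)"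
    using r by (simp_all only: sqrt_one_minus_square_pos)
  have "cnj (E * a (-2)) * b (-1) * of_real (sqrt (1 - rm\<^sup>2)) = of_real (sqrt (1 - rm'\<^sup>2))"
    using V[of "-1"] by (simp add: Uq_v_cis)
  note phase1 = gauge_phase_eq_1(1)[OF this unimod(1) unimod(2) unimod(3) s(2,4)]
  have "cnj (E * b (-1)) * a (-2) * of_real (sqrt (1 - rm\<^sup>2)) = of_real (sqrt (1 - rm'\<^sup>2))"
    using W[of "-2"] by (simp add: Uq_w_cis)
  note phase2 = gauge_phase_eq_1(1)[OF this unimod(1) unimod(3) unimod(2) s(2,4)]
  have "cnj (E * b 0) * a (-1) * of_real (sqrt (1 - rm\<^sup>2)) = of_real (sqrt (1 - rm'\<^sup>2))"
    using W[of "-1"] by (simp add: Uq_w_cis)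
  note phase3 = gauge_phase_eq_1(1)[OF this unimod(1) unimod(3) unimod(2) s(2,4)]
  have "cnj (E * a 0) * b 1 * of_real (sqrt (1 - rp\<^sup>2)) = of_real (sqrt (1 - rp'\<^sup>2))"
    using V[of 1] by (simp add: Uq_v_cis)
  note phase4 = gauge_phase_eq_1(1)[OF this unimod(1) unimod(2) unimod(3) s(1,3)]
  have "cnj (E * a 1) * b 2 * of_real (sqrt (1 - rp\<^sup>2)) = of_real (sqrt (1 - rp'\<^sup>2))"
    using V[of 2] by (simp add: Uq_v_cis)
  note phase5 = gauge_phase_eq_1(1)[OF this unimod(1) unimod(2) unimod(3) s(1,3)]
  have E2: "cnj E ^ 2 = 1"
    using gauge_phase_swap[OF unimod(1) unimod(2) unimod(3) phase1] phase2 by simp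
  have swap: "cnj (E * y) * x = 1" if "cnj (E * x) * y = 1" "cmod x = 1" "cmod y = 1" for x y
    using gauge_phase_swap[OF unimod(1) that(2,3,1)] E2 by simp
  show phase_defect: "cnj (E * a (-1)) * b 0 = 1"
    using swap[OF phase3] unimod by simp
  show "cnj (E * b 1) * a 0 = 1" "cnj (E * b 2) * a 1 = 1"
    using swap[OF phase4] swap[OF phase5] unimod by simp_all
  have "cnj (E * a (-1)) * a 0 = 1"
    by (rule Uq_gauge_radii(4)[OF r unimod(1,2) v])
  moreover from this have "cnj (E * a (-1)) \<noteq> 0"
    by force
  ultimately show "b 0 = a 0"
    using phase_defect by (metis mult_left_cancel)
qed

lemma Uq_gauge_parameters:
  assumes r: "rp \<in> {0<..<1}" "rm \<in> {0<..<1}" "r0 \<in> {0<..<1}" "\<alpha> \<in> {0<..<1}"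
    "rp' \<in> {0<..<1}" "rm' \<in> {0<..<1}" "r0' \<in> {0<..<1}" "\<alpha>' \<in> {0<..<1}"
    and t: "m1 \<in> {0..<2*pi}" "m2 \<in> {0..<2*pi}" "m3 \<in> {0..<2*pi}" "\<theta> \<in> {0..<2*pi}"
    "m1' \<in> {0..<2*pi}" "m2' \<in> {0..<2*pi}" "m3' \<in> {0..<2*pi}" "\<theta>' \<in> {0..<2*pi}"
    and unimod: "cmod E = 1" "\<And>k. cmod (a k) = 1" "\<And>k. cmod (b k) = 1" "cmod c = 1"
    and v: "Uq_v rp' rm' r0' m1' = gauge_v E a b (Uq_v rp rm r0 m1)"
    and w: "Uq_w rp' rm' r0' m1' m2' m3' = gauge_w E a b (Uq_w rp rm r0 m1 m2 m3)"
    and \<Phi>: "Phiq \<alpha>' \<theta>' = c *s vector [a 0 * Phiq \<alpha> \<theta> $ 1, b 0 * Phiq \<alpha> \<theta> $ 2]"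
  shows "rp = rp' \<and> rm = rm' \<and> r0 = r0' \<and> m1 = m1' \<and> m2 = m2' \<and> m3 = m3' \<and> \<alpha> = \<alpha>' \<and> \<theta> = \<theta>'"
proof -
  note radii = Uq_gauge_radii[OF r(1-3) r(5-7) unimod(1,2) v]
  note links = Uq_gauge_phases[OF r(1-3) r(5-7) unimod(1-3) v w]
  have s: "0 < sqrt (1 - rp\<^sup>2)" "0 < sqrt (1 - r0\<^sup>2)" "0 < sqrt (1 - \<alpha>\<^sup>2)"
    using r by (simp_all only: sqrt_one_minus_square_pos)
  have "Uq_v rp' rm' r0' m1' 0 $ 2 = Uq_v rp rm r0 m1 0 $ 2"
    using arg_cong[OF fun_cong[OF v, of 0], of "\<lambda>x. x $ 2"]
    by (simp only: gauge_v_nth diff_0 links(2) mult_1_left)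
  then have "cis m1' = cis m1"
    using s(2) by (simp add: Uq_v_cis radii(3))
  moreover have "Uq_w rp' rm' r0' m1' m2' m3' 0 $ 1 = Uq_w rp rm r0 m1 m2 m3 0 $ 1"
    using arg_cong[OF fun_cong[OF w, of 0], of "\<lambda>x. x $ 1"]
    by (simp only: gauge_w_nth add_0_left links(3) mult_1_left)
  then have "cis m2' = cis m2"
    using s(2) by (simp add: Uq_w_cis radii(3))
  moreover have "Uq_w rp' rm' r0' m1' m2' m3' 1 $ 1 = Uq_w rp rm r0 m1 m2 m3 1 $ 1"
    using arg_cong[OF fun_cong[OF w, of 1], of "\<lambda>x. x $ 1"]
    by (simp only: gauge_w_nth one_add_one links(4) mult_1_left)
  then have "cis m3' = cis m3"
    using s(1) by (simp add: Uq_w_cis radii(1))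
  moreover have "c * a 0 * of_real \<alpha> = of_real \<alpha>'"
    using arg_cong[OF \<Phi>, of "\<lambda>x. x $ 1"] by (simp add: Phiq_def mult.assoc)
  then have ca: "c * a 0 = 1" and "\<alpha> = \<alpha>'"
    using unimodular_mult_pos_eq[of "c * a 0" \<alpha> \<alpha>'] unimod r by (simp_all add: norm_mult)
  moreover have "cis \<theta>' = cis \<theta>"
    using arg_cong[OF \<Phi>, of "\<lambda>x. x $ 2"] s(3) \<open>\<alpha> = \<alpha>'\<close>
    by (simp add: Phiq_def cis_conv_exp[symmetric] links(1) ca mult.assoc[symmetric])
  ultimately show ?thesis
    using radii(1-3) t by (simp add: cis_eq_imp_eq)
qed

lemma Uq_unit_equiv_iff:
  assumes r: "rp \<in> {0<..<1}" "rm \<in> {0<..<1}" "r0 \<in> {0<..<1}" "\<alpha> \<in> {0<..<1}"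
    "rp' \<in> {0<..<1}" "rm' \<in> {0<..<1}" "r0' \<in> {0<..<1}" "\<alpha>' \<in> {0<..<1}"
    and t: "m1 \<in> {0..<2*pi}" "m2 \<in> {0..<2*pi}" "m3 \<in> {0..<2*pi}" "\<theta> \<in> {0..<2*pi}"
    "m1' \<in> {0..<2*pi}" "m2' \<in> {0..<2*pi}" "m3' \<in> {0..<2*pi}" "\<theta>' \<in> {0..<2*pi}"
  shows "unit_equiv (Uq rp rm r0 m1 m2 m3) (Phiq \<alpha> \<theta>) (Uq rp' rm' r0' m1' m2' m3') (Phiq \<alpha>' \<theta>')
    \<longleftrightarrow> rp = rp' \<and> rm = rm' \<and> r0 = r0' \<and> m1 = m1' \<and> m2 = m2' \<and> m3 = m3' \<and> \<alpha> = \<alpha>' \<and> \<theta> = \<theta>'"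
proof
  assume equiv: "unit_equiv (Uq rp rm r0 m1 m2 m3) (Phiq \<alpha> \<theta>) (Uq rp' rm' r0' m1' m2' m3') (Phiq \<alpha>' \<theta>')"
  have "Uq_v rp rm r0 m1 m \<noteq> 0" "Uq_w rp rm r0 m1 m2 m3 m \<noteq> 0" for m
    using r by (simp_all add: Uq_v_nonzero Uq_w_nonzero)
  then show "rp = rp' \<and> rm = rm' \<and> r0 = r0' \<and> m1 = m1' \<and> m2 = m2' \<and> m3 = m3' \<and> \<alpha> = \<alpha>' \<and> \<theta> = \<theta>'"
    using equiv unfolding Uq_eq_walk_blocks
    by (rule standard_walk_equiv_gauge) (rule Uq_gauge_parameters[OF r t])
qed (simp add: unit_equiv_refl)

theorem theorem3p2:
  shows "(\<forall>(B::blockop) (\<Phi>::cvec). two_phase_one_defect B \<and> norm \<Phi> = 1 \<longrightarrow>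
            (\<exists>rp rm r0 \<alpha> m1 m2 m3 \<theta>.
               0 \<le> rp \<and> rp \<le> 1 \<and> 0 \<le> rm \<and> rm \<le> 1 \<and> 0 \<le> r0 \<and> r0 \<le> 1 \<and>
               0 \<le> \<alpha> \<and> \<alpha> \<le> 1 \<and>
               unit_equiv B \<Phi> (Uq rp rm r0 m1 m2 m3) (Phiq \<alpha> \<theta>)))
       \<and>
         (\<forall>rp rm r0 m1 m2 m3 \<alpha> \<theta> rp' rm' r0' m1' m2' m3' \<alpha>' \<theta>'.
            rp \<in> {0<..<1} \<and> rm \<in> {0<..<1} \<and> r0 \<in> {0<..<1} \<and> \<alpha> \<in> {0<..<1} \<and>
            rp' \<in> {0<..<1} \<and> rm' \<in> {0<..<1} \<and> r0' \<in> {0<..<1} \<and> \<alpha>' \<in> {0<..<1} \<and>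
            m1 \<in> {0..<2*pi} \<and> m2 \<in> {0..<2*pi} \<and> m3 \<in> {0..<2*pi} \<and> \<theta> \<in> {0..<2*pi} \<and>
            m1' \<in> {0..<2*pi} \<and> m2' \<in> {0..<2*pi} \<and> m3' \<in> {0..<2*pi} \<and> \<theta>' \<in> {0..<2*pi} \<longrightarrow>
            (unit_equiv (Uq rp rm r0 m1 m2 m3) (Phiq \<alpha> \<theta>) (Uq rp' rm' r0' m1' m2' m3') (Phiq \<alpha>' \<theta>')
             \<longleftrightarrow> rp = rp' \<and> rm = rm' \<and> r0 = r0' \<and> m1 = m1' \<and> m2 = m2' \<and> m3 = m3' \<and>
                 \<alpha> = \<alpha>' \<and> \<theta> = \<theta>'))"
proof (intro conjI allI impI, goal_cases)
  case 1
  then show ?case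
    by (intro two_phase_walk_normal_form) simp_all
next
  case 2
  then show ?case
    by (intro Uq_unit_equiv_iff) simp_all
qed

end
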